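(* For every integer $n\ge1$, $$\log_2(n+1)\le \kappa(n)\le \lceil \log_2(n+1)\rceil .$$ In particular $\kappa(n)=\log_2(n+1)$ whenever $n+1$ is a power of $2$.
   Context: $\Delta_n=\{t=(t_i)_{i=1}^{n+1}: t_i\ge0,\ \sum t_i=1\}$ is the standard $n$-simplex with vertices $e_1,\dots,e_{n+1}$. A function $f:C\to\mathbb{R}$ on a convex set $C$ is approximately convex if $f(tx+(1-t)y)\le tf(x)+(1-t)f(y)+1$ for all $x,y\in C$, $t\in[0,1]$. Let $\mathcal{F}_n$ be the set of all approximately convex $f:\Delta_n\to\mathbb{R}$ with $f(e_i)\le 0$ for $1\le i\le n+1$, and $\kappa(n)=\sup_{f\in\mathcal{F}_n}\sup_{x\in\Delta_n}f(x)$. $\lceil x\rceil$ denotes the least integer $\ge x$. *)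

theory Defs
  imports "HOL-Analysis.Analysis" "HOL-Library.Extended_Real"
begin

text \<open>The standard n-simplex, with points in R^(n+1) represented as functions
  nat => real supported on {0..n} (coordinates indexed 0..n instead of 1..n+1).\<close>
definition std_simplex :: "nat \<Rightarrow> (nat \<Rightarrow> real) set" where
  "std_simplex n = {t. (\<forall>i. 0 \<le> t i) \<and> (\<forall>i>n. t i = 0) \<and> (\<Sum>i\<le>n. t i) = 1}"

definition simplex_vertex :: "nat \<Rightarrow> nat \<Rightarrow> real" where
  "simplex_vertex i = (\<lambda>j. if j = i then 1 else 0)"

definition approx_convex_on :: "(nat \<Rightarrow> real) set \<Rightarrow> ((nat \<Rightarrow> real) \<Rightarrow> real) \<Rightarrow> bool" where
  "approx_convex_on C f \<longleftrightarrow>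
     (\<forall>x\<in>C. \<forall>y\<in>C. \<forall>t::real. 0 \<le> t \<and> t \<le> 1 \<longrightarrow>
        f (\<lambda>i. t * x i + (1 - t) * y i) \<le> t * f x + (1 - t) * f y + 1)"

definition F_class :: "nat \<Rightarrow> ((nat \<Rightarrow> real) \<Rightarrow> real) set" where
  "F_class n = {f. approx_convex_on (std_simplex n) f \<and> (\<forall>i\<le>n. f (simplex_vertex i) \<le> 0)}"

text \<open>kappa(n) as a supremum in the extended reals (so it is a priori well defined).\<close>
definition kappa :: "nat \<Rightarrow> ereal" where
  "kappa n = (SUP f\<in>F_class n. SUP x\<in>std_simplex n. ereal (f x))"

end

theory Submission
  imports Defs
begin

(* Lower bound: the entropy in bits, x |-> - sum_i x_i log_2 x_i, lies in F_n, because
   mixing two distributions raises the entropy by at most one bit (the entropy of the coin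
   choosing between them); at the barycentre it equals log_2 (n + 1).
   Upper bound: splitting the support of a point supported on at most 2^k vertices into two
   halves writes it as a convex combination of two points supported on at most 2^(k-1) vertices
   each, so approximate convexity and induction on k bound f there by k. *)

lemma mult_ln_mult:
  fixes t a :: real
  assumes "0 < t" "0 \<le> a"
  shows "(t * a) * ln (t * a) = t * (a * ln a) + a * (t * ln t)"
  using assms by (cases "a = 0") (simp_all add: ln_mult_pos algebra_simps)

lemma mult_ln_superadditive:
  fixes p q :: real
  assumes "0 \<le> p" "0 \<le> q"
  shows "p * ln p + q * ln q \<le> (p + q) * ln (p + q)"
proof (cases "p = 0 \<or> q = 0")
  case True
  then show ?thesis by auto
next
  case False
  with assms have "p * ln p \<le> p * ln (p + q)" "q * ln q \<le> q * ln (p + q)"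
    by (auto intro!: mult_left_mono)
  then show ?thesis by (simp add: distrib_right)
qed

lemma mult_ln_diff_le:
  fixes p q :: real
  assumes "0 < p" "0 < q"
  shows "p * (ln q - ln p) \<le> q - p"
proof -
  have "p * ln (q / p) \<le> p * (q / p - 1)"
    using assms by (intro mult_left_mono ln_le_minus_one) auto
  then show ?thesis using assms by (simp add: ln_div right_diff_distrib)
qed

text \<open>Gibbs' inequality against the uniform distribution on two points.\<close>
lemma binary_entropy_le_ln2:
  fixes t :: real
  assumes "0 < t" "t < 1"
  shows "- (t * ln t + (1 - t) * ln (1 - t)) \<le> ln 2"
proof -
  have "t * (ln (1/2) - ln t) + (1 - t) * (ln (1/2) - ln (1 - t)) \<le> (1/2 - t) + (1/2 - (1 - t))"
    using assms by (intro add_mono mult_ln_diff_le) auto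
  then show ?thesis by (simp add: ln_div algebra_simps)
qed

lemma mult_ln_convex_combination:
  fixes t a b :: real
  assumes "0 < t" "t < 1" "0 \<le> a" "0 \<le> b"
  shows "t * (a * ln a) + (1 - t) * (b * ln b) + (a * (t * ln t) + b * ((1 - t) * ln (1 - t)))
    \<le> (t * a + (1 - t) * b) * ln (t * a + (1 - t) * b)"
  using mult_ln_superadditive[of "t * a" "(1 - t) * b"] mult_ln_mult[of t a]
    mult_ln_mult[of "1 - t" b] assms
  by simp

text \<open>Since ln 0 = 0 in Isabelle, the convention 0 log 0 = 0 holds automatically.\<close>
definition entropy :: "nat \<Rightarrow> (nat \<Rightarrow> real) \<Rightarrow> real" where
  "entropy n x = - (\<Sum>i\<le>n. x i * ln (x i)) / ln 2"

lemma entropy_convex_combination: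
  assumes a: "a \<in> std_simplex n" and b: "b \<in> std_simplex n" and t: "0 < t" "t < 1"
  shows "entropy n (\<lambda>i. t * a i + (1 - t) * b i) \<le> t * entropy n a + (1 - t) * entropy n b + 1"
proof -
  have a0: "\<And>i. 0 \<le> a i" and a1: "(\<Sum>i\<le>n. a i) = 1"
    and b0: "\<And>i. 0 \<le> b i" and b1: "(\<Sum>i\<le>n. b i) = 1"
    using a b by (auto simp: std_simplex_def)
  have "t * (\<Sum>i\<le>n. a i * ln (a i)) + (1 - t) * (\<Sum>i\<le>n. b i * ln (b i))
        + (t * ln t + (1 - t) * ln (1 - t))
      = (\<Sum>i\<le>n. t * (a i * ln (a i)) + (1 - t) * (b i * ln (b i))
        + (a i * (t * ln t) + b i * ((1 - t) * ln (1 - t))))"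
    by (simp add: a1 b1 sum.distrib sum_distrib_left flip: sum_distrib_right)
  also have "\<dots> \<le> (\<Sum>i\<le>n. (t * a i + (1 - t) * b i) * ln (t * a i + (1 - t) * b i))"
    using t a0 b0 by (intro sum_mono mult_ln_convex_combination) auto
  finally show ?thesis
    using binary_entropy_le_ln2[OF t] unfolding entropy_def by (simp add: field_simps)
qed

lemma entropy_approx_convex: "approx_convex_on (std_simplex n) (entropy n)"
  unfolding approx_convex_on_def
proof (intro ballI allI impI)
  fix a b and t :: real
  assume "a \<in> std_simplex n" "b \<in> std_simplex n" "0 \<le> t \<and> t \<le> 1"
  then show "entropy n (\<lambda>i. t * a i + (1 - t) * b i) \<le> t * entropy n a + (1 - t) * entropy n b + 1"
    using entropy_convex_combination[of a n b t] by (cases "t = 0 \<or> t = 1") auto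
qed

lemma entropy_simplex_vertex: "entropy n (simplex_vertex i) = 0"
  unfolding entropy_def by (simp add: sum.neutral simplex_vertex_def)

lemma entropy_in_F_class: "entropy n \<in> F_class n"
  by (simp add: F_class_def entropy_approx_convex entropy_simplex_vertex)

definition simplex_barycenter :: "nat \<Rightarrow> nat \<Rightarrow> real" where
  "simplex_barycenter n = (\<lambda>i. if i \<le> n then 1 / (real n + 1) else 0)"

lemma simplex_barycenter_in_std_simplex: "simplex_barycenter n \<in> std_simplex n"
  by (simp add: std_simplex_def simplex_barycenter_def)

lemma entropy_simplex_barycenter: "entropy n (simplex_barycenter n) = log 2 (real n + 1)"
proof -
  have "(\<Sum>i\<le>n. simplex_barycenter n i * ln (simplex_barycenter n i)) = - ln (real n + 1)"
    by (simp add: simplex_barycenter_def ln_div add.commute)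
  then show ?thesis by (simp add: entropy_def log_def)
qed

lemma F_class_le_kappa:
  assumes "f \<in> F_class n" "x \<in> std_simplex n"
  shows "ereal (f x) \<le> kappa n"
  unfolding kappa_def using assms by (blast intro: SUP_upper2)

lemma log2_le_kappa: "ereal (log 2 (real n + 1)) \<le> kappa n"
  using F_class_le_kappa[OF entropy_in_F_class simplex_barycenter_in_std_simplex]
  by (simp add: entropy_simplex_barycenter)

lemma sum_std_simplex_support:
  assumes "x \<in> std_simplex n" "S \<subseteq> {..n}" "{i. x i \<noteq> 0} \<subseteq> S"
  shows "(\<Sum>i\<in>S. x i) = 1"
proof -
  have "(\<Sum>i\<in>S. x i) = (\<Sum>i\<le>n. x i)"
    using assms(2,3) by (intro sum.mono_neutral_left) auto
  with assms(1) show ?thesis by (simp add: std_simplex_def)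
qed

lemma std_simplex_support_card_le_1:
  assumes x: "x \<in> std_simplex n" and S: "S \<subseteq> {..n}" "card S \<le> 1" "{i. x i \<noteq> 0} \<subseteq> S"
  obtains j where "j \<le> n" "x = simplex_vertex j"
proof -
  have sum_S: "(\<Sum>i\<in>S. x i) = 1" using sum_std_simplex_support[OF x S(1,3)] .
  then have "S \<noteq> {}" by auto
  with S(1,2) obtain j where "S = {j}"
    by (metis card_0_eq card_1_singletonE finite_atMost finite_subset le_Suc_eq le_zero_eq One_nat_def)
  with S sum_S have "j \<le> n" "x = simplex_vertex j"
    by (auto simp: simplex_vertex_def fun_eq_iff)
  then show thesis by (rule that)
qed

lemma std_simplex_renormalize:
  assumes x: "x \<in> std_simplex n" and A: "A \<subseteq> {..n}" and s: "s = (\<Sum>i\<in>A. x i)" "0 < s"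
  shows "(\<lambda>i. if i \<in> A then x i / s else 0) \<in> std_simplex n"
proof -
  have "(\<Sum>i\<le>n. if i \<in> A then x i / s else 0) = (\<Sum>i\<in>A. x i / s)"
    using A by (simp add: sum.inter_restrict[symmetric] Int_absorb1)
  also have "\<dots> = 1" using s by (simp flip: sum_divide_distrib)
  finally show ?thesis using x A s(2) by (auto simp: std_simplex_def)
qed

lemma approx_convex_le_on_disjoint_support_Un:
  assumes f: "approx_convex_on (std_simplex n) f"
    and A: "A \<subseteq> {..n}" and B: "B \<subseteq> {..n}" and AB: "A \<inter> B = {}"
    and le_A: "\<And>y. y \<in> std_simplex n \<Longrightarrow> {i. y i \<noteq> 0} \<subseteq> A \<Longrightarrow> f y \<le> c"
    and le_B: "\<And>y. y \<in> std_simplex n \<Longrightarrow> {i. y i \<noteq> 0} \<subseteq> B \<Longrightarrow> f y \<le> c"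
    and x: "x \<in> std_simplex n" "{i. x i \<noteq> 0} \<subseteq> A \<union> B"
  shows "f x \<le> c + 1"
proof -
  define s where "s = (\<Sum>i\<in>A. x i)"
  have x_nonneg: "\<And>i. 0 \<le> x i" using x(1) by (simp add: std_simplex_def)
  have fin: "finite A" "finite B" using A B finite_subset by blast+
  have sum_B: "(\<Sum>i\<in>B. x i) = 1 - s"
    using sum_std_simplex_support[OF x(1) _ x(2)] A B AB fin by (simp add: s_def sum.union_disjoint)
  have "0 \<le> s" "0 \<le> 1 - s"
    unfolding s_def sum_B[symmetric, unfolded s_def] by (simp_all add: x_nonneg sum_nonneg)
  then consider "s = 0" | "s = 1" | "0 < s" "s < 1" by linarith
  then show ?thesis
  proof cases
    case 1
    then have "{i. x i \<noteq> 0} \<subseteq> B"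
      using x(2) fin x_nonneg by (auto simp: s_def sum_nonneg_eq_0_iff)
    then show ?thesis using le_B x(1) by fastforce
  next
    case 2
    then have "{i. x i \<noteq> 0} \<subseteq> A"
      using x(2) fin x_nonneg sum_B by (auto simp: sum_nonneg_eq_0_iff)
    then show ?thesis using le_A x(1) by fastforce
  next
    case 3
    define y where "y = (\<lambda>i. if i \<in> A then x i / s else 0)"
    define z where "z = (\<lambda>i. if i \<in> B then x i / (1 - s) else 0)"
    have y: "y \<in> std_simplex n" and z: "z \<in> std_simplex n"
      unfolding y_def z_def using 3 std_simplex_renormalize[OF x(1)] A B s_def sum_B by auto
    have "{i. y i \<noteq> 0} \<subseteq> A" "{i. z i \<noteq> 0} \<subseteq> B" by (auto simp: y_def z_def)
    then have "f y \<le> c" "f z \<le> c" using le_A le_B y z by auto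
    have "x = (\<lambda>i. s * y i + (1 - s) * z i)"
      using 3 x(2) AB by (auto simp: y_def z_def fun_eq_iff)
    then have "f x \<le> s * f y + (1 - s) * f z + 1"
      using f y z 3 unfolding approx_convex_on_def by auto
    also have "\<dots> \<le> s * c + (1 - s) * c + 1"
      using \<open>f y \<le> c\<close> \<open>f z \<le> c\<close> 3 by (intro add_mono mult_left_mono) auto
    finally show ?thesis by (simp add: algebra_simps)
  qed
qed

lemma F_class_le_of_card_support:
  assumes f: "f \<in> F_class n"
    and "x \<in> std_simplex n" "S \<subseteq> {..n}" "card S \<le> 2 ^ k" "{i. x i \<noteq> 0} \<subseteq> S"
  shows "f x \<le> real k"
  using assms(2-)
proof (induction k arbitrary: S x)
  case 0
  then have "card S \<le> 1" by simp
  then obtain j where "j \<le> n" "x = simplex_vertex j"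
    using std_simplex_support_card_le_1 "0.prems"(1,2,4) by blast
  with f show ?case by (simp add: F_class_def)
next
  case (Suc k)
  obtain A where A: "A \<subseteq> S" "card A = card S div 2" "finite A"
    by (rule obtain_subset_with_card_n[of "card S div 2" S]) auto
  then have "card (S - A) = card S - card S div 2" by (simp add: card_Diff_subset)
  with A Suc.prems(3) have card_le: "card A \<le> 2 ^ k" "card (S - A) \<le> 2 ^ k" by simp_all
  have "f x \<le> real k + 1"
  proof (rule approx_convex_le_on_disjoint_support_Un[where f = f and A = A and B = "S - A"])
    show "approx_convex_on (std_simplex n) f" using f by (simp add: F_class_def)
    show "A \<subseteq> {..n}" "S - A \<subseteq> {..n}" "A \<inter> (S - A) = {}"
      using A(1) Suc.prems(2) by auto
    show "f y \<le> real k" if "y \<in> std_simplex n" "{i. y i \<noteq> 0} \<subseteq> A" for y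
      using Suc.IH[OF that(1) _ card_le(1) that(2)] A(1) Suc.prems(2) by blast
    show "f y \<le> real k" if "y \<in> std_simplex n" "{i. y i \<noteq> 0} \<subseteq> S - A" for y
      using Suc.IH[OF that(1) _ card_le(2) that(2)] Suc.prems(2) by blast
    show "x \<in> std_simplex n" "{i. x i \<noteq> 0} \<subseteq> A \<union> (S - A)"
      using Suc.prems(1,4) A(1) by auto
  qed
  then show ?case by simp
qed

lemma kappa_le_of_le_two_power:
  assumes "n + 1 \<le> 2 ^ k"
  shows "kappa n \<le> ereal (real k)"
  unfolding kappa_def
proof (intro SUP_least)
  fix f x assume "f \<in> F_class n" "x \<in> std_simplex n"
  moreover have "{i. x i \<noteq> 0} \<subseteq> {..n}"
    using \<open>x \<in> std_simplex n\<close> by (auto simp: std_simplex_def intro: leI)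
  ultimately have "f x \<le> real k"
    using assms by (intro F_class_le_of_card_support[of f n x "{..n}" k]) auto
  then show "ereal (f x) \<le> ereal (real k)" by simp
qed

lemma le_two_power_ceiling_log2:
  fixes m :: nat
  assumes "0 < m"
  shows "m \<le> 2 ^ nat \<lceil>log 2 m\<rceil>"
proof -
  have "real m = 2 powr log 2 m" using assms by simp
  also have "\<dots> \<le> 2 powr real (nat \<lceil>log 2 m\<rceil>)" by (intro powr_mono) linarith+
  also have "\<dots> = 2 ^ nat \<lceil>log 2 m\<rceil>" by (simp add: powr_realpow)
  finally show ?thesis by (simp flip: of_nat_le_iff)
qed

lemma kappa_le_ceiling_log2: "kappa n \<le> ereal (real_of_int \<lceil>log 2 (real n + 1)\<rceil>)"
proof -
  have "kappa n \<le> ereal (real (nat \<lceil>log 2 (real (n + 1))\<rceil>))"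
    by (intro kappa_le_of_le_two_power le_two_power_ceiling_log2) simp
  then show ?thesis by (simp add: add.commute)
qed

theorem mainTheorem2:
  fixes n :: nat
  assumes "n \<ge> 1"
  shows "ereal (log 2 (real n + 1)) \<le> kappa n
       \<and> kappa n \<le> ereal (real_of_int \<lceil>log 2 (real n + 1)\<rceil>)
       \<and> (\<forall>k::nat. n + 1 = 2 ^ k \<longrightarrow> kappa n = ereal (log 2 (real n + 1)))"
proof (intro conjI allI impI)
  show "ereal (log 2 (real n + 1)) \<le> kappa n" by (rule log2_le_kappa)
  show "kappa n \<le> ereal (real_of_int \<lceil>log 2 (real n + 1)\<rceil>)" by (rule kappa_le_ceiling_log2)
  fix k :: nat
  assume "n + 1 = 2 ^ k"
  then have "real n + 1 = 2 ^ k" by (metis of_nat_1 of_nat_add of_nat_numeral of_nat_power)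
  then have "log 2 (real n + 1) = real k" by simp
  then show "kappa n = ereal (log 2 (real n + 1))"
    using log2_le_kappa[of n] kappa_le_ceiling_log2[of n] by simp
qed

end
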